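(* Consider the planar system $$\frac{dN}{dt}=rN\left(1-\frac{N}{K}-\frac{h}{w+N}\right)-\frac{aNP}{b+N^2},\qquad \frac{dP}{dt}=\frac{cNP}{b+N^2}-\delta P,$$ where $r,K,h,w,a,b,c,\delta$ are positive constants with $w<K$, and suppose the Allee effect is weak, i.e. $h<w$. Let $$N_1=\frac{(K-w)+\sqrt{(K-w)^2-4K(h-w)}}{2}$$ and $E_1=(N_1,0)$. Then $E_1$ is locally asymptotically stable if $c<\frac{\delta(b+N_1^2)}{N_1}$, and unstable (a saddle) if $c>\frac{\delta(b+N_1^2)}{N_1}$.
   Context: $N(t)$ is the prey density and $P(t)$ the predator density. $E_1$ is the (unique) predator-free equilibrium with positive prey density in the weak Allee case. *)

theory Defs
  imports "HOL-Analysis.Analysis"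
begin

definition pp_field :: "real \<Rightarrow> real \<Rightarrow> real \<Rightarrow> real \<Rightarrow> real \<Rightarrow> real \<Rightarrow> real \<Rightarrow> real
    \<Rightarrow> real \<times> real \<Rightarrow> real \<times> real" where
  "pp_field r K h w a b c \<delta> = (\<lambda>(N, P).
     (r * N * (1 - N / K - h / (w + N)) - a * N * P / (b + N^2),
      c * N * P / (b + N^2) - \<delta> * P))"

definition solution_on :: "('a::real_normed_vector \<Rightarrow> 'a) \<Rightarrow> (real \<Rightarrow> 'a) \<Rightarrow> real set \<Rightarrow> bool" where
  "solution_on F x I \<longleftrightarrow> (\<forall>t\<in>I. (x has_vector_derivative F (x t)) (at t within I))"

text \<open>Lyapunov stability: for every solution on any forward interval [0,T].\<close>
definition lyapunov_stable :: "('a::real_normed_vector \<Rightarrow> 'a) \<Rightarrow> 'a \<Rightarrow> bool" where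
  "lyapunov_stable F E \<longleftrightarrow>
     (\<forall>\<epsilon>>0. \<exists>d>0. \<forall>x T. 0 \<le> T \<longrightarrow> solution_on F x {0..T} \<longrightarrow> dist (x 0) E < d
        \<longrightarrow> (\<forall>t\<in>{0..T}. dist (x t) E < \<epsilon>))"

definition locally_attractive :: "('a::real_normed_vector \<Rightarrow> 'a) \<Rightarrow> 'a \<Rightarrow> bool" where
  "locally_attractive F E \<longleftrightarrow>
     (\<exists>\<eta>>0. \<forall>x. solution_on F x {0..} \<longrightarrow> dist (x 0) E < \<eta> \<longrightarrow> (x \<longlongrightarrow> E) at_top)"

definition locally_asymptotically_stable :: "('a::real_normed_vector \<Rightarrow> 'a) \<Rightarrow> 'a \<Rightarrow> bool" where
  "locally_asymptotically_stable F E \<longleftrightarrow>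
     F E = 0 \<and> lyapunov_stable F E \<and> locally_attractive F E"

text \<open>Saddle: equilibrium whose linearisation has a negative and a positive real eigenvalue
  (planar case).\<close>
definition is_saddle :: "('a::real_normed_vector \<Rightarrow> 'a) \<Rightarrow> 'a \<Rightarrow> bool" where
  "is_saddle F E \<longleftrightarrow> F E = 0 \<and> (\<exists>J. (F has_derivative J) (at E) \<and>
     (\<exists>l1 l2 v1 v2. l1 < 0 \<and> 0 < l2 \<and> v1 \<noteq> 0 \<and> v2 \<noteq> 0 \<and>
        J v1 = l1 *\<^sub>R v1 \<and> J v2 = l2 *\<^sub>R v2))"

end

(*
  E1 = (N1, 0) is an equilibrium because N1 is the positive root of N^2 - (K - w) N + K (h - w),
  i.e. a zero of the per-capita prey growth rate r (1 - N/K - h/(w + N)).  The Jacobian at E1 is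
  upper triangular: along the prey axis its eigenvalue is N1 r (h/(w + N1)^2 - 1/K) < 0, and
  transversally it is the net predator growth rate phi = c N1/(b + N1^2) - delta, which is negative
  exactly when c < delta (b + N1^2)/N1.

  If phi < 0, a weighted quadratic form u^2 + k p^2 decreases strictly along the linearised flow;
  by differentiability it still does so for the nonlinear field near E1, which gives exponential
  decay of nearby solutions and hence local asymptotic stability.

  If phi > 0, the predator density obeys P' = P phi(N) with phi bounded below near E1, so solutions
  starting at (N1, P0) with small P0 > 0 leave a fixed neighbourhood of E1.  Such solutions exist by
  the Picard-Lindeloef argument (Banach's fixed point theorem for the Bielecki-rescaled Picard
  operator), applied to the field composed with the nearest-point projection onto a closed ball.
  The two eigenvectors of the Jacobian exhibit E1 as a saddle.
*)

theory Submission
  imports Defs "HOL-Library.Quadratic_Discriminant"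
begin

section \<open>Solutions and scalar differential inequalities\<close>

lemma solution_on_continuous_on: "solution_on F x I \<Longrightarrow> continuous_on I x"
  unfolding solution_on_def continuous_on_eq_continuous_within
  using has_vector_derivative_continuous by blast

lemma solution_on_subset: "solution_on F x S \<Longrightarrow> S' \<subseteq> S \<Longrightarrow> solution_on F x S'"
  unfolding solution_on_def using has_vector_derivative_within_subset by blast

lemma first_hitting_time:
  fixes f :: "real \<Rightarrow> real"
  assumes "continuous_on {0..T} f" "f 0 < R" "t0 \<in> {0..T}" "R \<le> f t0"
  obtains t1 where "t1 \<in> {0..T}" "f t1 = R" "\<forall>t\<in>{0..<t1}. f t < R"
proof -
  define Z where "Z = {0..T} \<inter> f -` {R..}"
  have "closed Z"
    unfolding Z_def by (rule continuous_closed_preimage[OF assms(1)]) auto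
  moreover have "Z \<noteq> {}" "bdd_below Z"
    using assms(3,4) by (auto simp: Z_def intro: bdd_belowI[of _ 0])
  ultimately have t1: "Inf Z \<in> Z" and least: "\<And>t. t \<in> Z \<Longrightarrow> Inf Z \<le> t"
    by (simp_all add: closed_contains_Inf cInf_lower)
  have before: "\<forall>t\<in>{0..<Inf Z}. f t < R"
  proof
    fix t assume "t \<in> {0..<Inf Z}"
    then show "f t < R"
      using least[of t] t1 by (fastforce simp: Z_def)
  qed
  have "continuous_on {0..Inf Z} f"
    using assms(1) t1 by (auto simp: Z_def intro: continuous_on_subset)
  then obtain s where "s \<in> {0..Inf Z}" "f s = R"
    using IVT'[of f 0 R "Inf Z"] assms(2) t1 by (auto simp: Z_def)
  with before have "f (Inf Z) = R"
    by (metis atLeastAtMost_iff atLeastLessThan_iff less_irrefl order_le_less)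
  with t1 before show thesis
    by (intro that[of "Inf Z"]) (auto simp: Z_def)
qed

lemma exp_bound_of_differential_inequality:
  fixes W W' :: "real \<Rightarrow> real"
  assumes "0 \<le> s" "continuous_on {0..s} W"
    and "\<And>t. 0 < t \<Longrightarrow> t < s \<Longrightarrow> (W has_real_derivative W' t) (at t)"
    and "\<And>t. 0 < t \<Longrightarrow> t < s \<Longrightarrow> W' t \<le> -\<gamma> * W t"
  shows "W s \<le> W 0 * exp (-\<gamma> * s)"
proof -
  have "(\<lambda>t. W t * exp (\<gamma> * t)) s \<le> (\<lambda>t. W t * exp (\<gamma> * t)) 0"
  proof (rule DERIV_nonpos_imp_decreasing_open[OF assms(1)])
    fix t assume t: "0 < t" "t < s"
    have "((\<lambda>t. W t * exp (\<gamma> * t)) has_real_derivative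
            exp (\<gamma> * t) * (W' t + \<gamma> * W t)) (at t)"
      using assms(3)[OF t] by (auto intro!: derivative_eq_intros simp: algebra_simps)
    moreover have "exp (\<gamma> * t) * (W' t + \<gamma> * W t) \<le> 0"
      using assms(4)[OF t] by (intro mult_nonneg_nonpos) auto
    ultimately show "\<exists>y. ((\<lambda>t. W t * exp (\<gamma> * t)) has_real_derivative y) (at t) \<and> y \<le> 0"
      by blast
  qed (use assms(2) in \<open>intro continuous_intros\<close>)
  then show ?thesis
    by (simp add: exp_minus field_simps)
qed

lemma exp_decay_while_below:
  fixes W W' :: "real \<Rightarrow> real"
  assumes "0 \<le> T" "continuous_on {0..T} W" "W 0 < R" "0 < R" "0 \<le> \<gamma>"
    and "\<And>t. t \<in> {0..T} \<Longrightarrow> W t < R \<Longrightarrow>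
           (W has_real_derivative W' t) (at t within {0..T}) \<and> W' t \<le> -\<gamma> * W t"
  shows "\<forall>t\<in>{0..T}. W t \<le> W 0 * exp (-\<gamma> * t)"
proof -
  have bound: "W s \<le> W 0 * exp (-\<gamma> * s)"
    if "s \<in> {0..T}" "\<forall>t\<in>{0..<s}. W t < R" for s
  proof (rule exp_bound_of_differential_inequality)
    fix t assume t: "0 < t" "t < s"
    then have "at t within {0..T} = at t"
      using that(1) by (intro at_within_Icc_at) auto
    then show "(W has_real_derivative W' t) (at t)" "W' t \<le> -\<gamma> * W t"
      using assms(6)[of t] that t by auto
  qed (use that assms(2) in \<open>auto intro: continuous_on_subset\<close>)
  have below: "W 0 * exp (-\<gamma> * s) < R" if "0 \<le> s" for s
  proof (cases "W 0 \<le> 0")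
    case False
    have "exp (-\<gamma> * s) \<le> 1"
      using assms(5) that by (simp add: mult_nonneg_nonneg)
    then show ?thesis
      using False assms(3) by (smt (verit) mult_left_le)
  qed (use assms(4) mult_nonpos_nonneg[of "W 0" "exp (-\<gamma> * s)"] in simp)
  have "\<forall>t\<in>{0..T}. W t < R"
  proof (rule ccontr)
    assume "\<not> (\<forall>t\<in>{0..T}. W t < R)"
    then obtain t0 where "t0 \<in> {0..T}" "R \<le> W t0"
      by force
    then obtain t1 where "t1 \<in> {0..T}" "W t1 = R" "\<forall>t\<in>{0..<t1}. W t < R"
      using first_hitting_time[OF assms(2,3)] by blast
    then show False
      using bound below[of t1] by force
  qed
  then show ?thesis
    using bound by auto
qed

lemma linear_ode_explicit_solution:
  fixes W a :: "real \<Rightarrow> real"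
  assumes "0 \<le> T" "continuous_on {0..T} a"
    and "\<And>t. t \<in> {0..T} \<Longrightarrow> (W has_real_derivative a t * W t) (at t within {0..T})"
  shows "W T = W 0 * exp (integral {0..T} a)"
proof -
  define A where "A t = integral {0..t} a" for t
  have "((\<lambda>t. W t * exp (- A t)) has_real_derivative 0) (at t within {0..T})"
    if "t \<in> {0..T}" for t
  proof -
    have "(A has_real_derivative a t) (at t within {0..T})"
      unfolding A_def has_real_derivative_iff_has_vector_derivative
      by (rule integral_has_vector_derivative[OF assms(2) that])
    then have "((\<lambda>t. W t * exp (- A t)) has_real_derivative
        a t * W t * exp (- A t) + exp (- A t) * - a t * W t) (at t within {0..T})"
      by (intro derivative_intros assms(3)[OF that])
    then show ?thesis
      by (simp add: algebra_simps)
  qed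
  then obtain C where "\<forall>t\<in>{0..T}. W t * exp (- A t) = C"
    using has_field_derivative_zero_constant[of "{0..T}" "\<lambda>t. W t * exp (- A t)"] by auto
  then have "W T * exp (- A T) = W 0 * exp (- A 0)"
    using assms(1) by auto
  then show ?thesis
    by (simp add: A_def exp_minus field_simps)
qed

section \<open>Solutions of Lipschitz vector fields\<close>

lemma lipschitz_on_of_continuous_partials:
  fixes f :: "real \<times> real \<Rightarrow> 'b::real_normed_vector"
  assumes "convex S" "compact S"
    and "\<And>z. z \<in> S \<Longrightarrow> (f has_derivative (\<lambda>v. fst v *\<^sub>R D\<^sub>1 z + snd v *\<^sub>R D\<^sub>2 z)) (at z within S)"
    and "continuous_on S D\<^sub>1" "continuous_on S D\<^sub>2"
  obtains L where "L-lipschitz_on S f"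
proof -
  obtain B\<^sub>1 B\<^sub>2 where "0 < B\<^sub>1" "\<And>z. z \<in> S \<Longrightarrow> norm (D\<^sub>1 z) \<le> B\<^sub>1"
    and "0 < B\<^sub>2" "\<And>z. z \<in> S \<Longrightarrow> norm (D\<^sub>2 z) \<le> B\<^sub>2"
    using compact_continuous_image[OF assms(4,2)] compact_continuous_image[OF assms(5,2)]
    by (metis compact_imp_bounded bounded_pos imageI)
  have "onorm (\<lambda>v. fst v *\<^sub>R D\<^sub>1 z + snd v *\<^sub>R D\<^sub>2 z) \<le> B\<^sub>1 + B\<^sub>2" if "z \<in> S" for z
  proof (rule onorm_le)
    fix v :: "real \<times> real"
    have "norm (fst v *\<^sub>R D\<^sub>1 z + snd v *\<^sub>R D\<^sub>2 z) \<le> \<bar>fst v\<bar> * norm (D\<^sub>1 z) + \<bar>snd v\<bar> * norm (D\<^sub>2 z)"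
      by (rule order_trans[OF norm_triangle_ineq]) simp
    also have "\<dots> \<le> norm v * B\<^sub>1 + norm v * B\<^sub>2"
      using norm_fst_le[of "fst v" "snd v"] norm_snd_le[of "snd v" "fst v"]
        \<open>z \<in> S \<Longrightarrow> norm (D\<^sub>1 z) \<le> B\<^sub>1\<close> \<open>z \<in> S \<Longrightarrow> norm (D\<^sub>2 z) \<le> B\<^sub>2\<close> that
      by (intro add_mono mult_mono) auto
    finally show "norm (fst v *\<^sub>R D\<^sub>1 z + snd v *\<^sub>R D\<^sub>2 z) \<le> (B\<^sub>1 + B\<^sub>2) * norm v"
      by (simp add: algebra_simps)
  qed
  then have "(B\<^sub>1 + B\<^sub>2)-lipschitz_on S f"
    using \<open>0 < B\<^sub>1\<close> \<open>0 < B\<^sub>2\<close> by (intro bounded_derivative_imp_lipschitz[OF assms(3,1)]) auto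
  then show thesis
    by (rule that)
qed

lemma bielecki_integral_estimate:
  fixes G :: "'a::banach \<Rightarrow> 'a" and z1 z2 :: "real \<Rightarrow> 'a"
  assumes "0 < L" and lip: "\<And>u v. norm (G u - G v) \<le> L * norm (u - v)"
    and "continuous_on UNIV z1" "continuous_on UNIV z2"
    and D: "\<And>s. norm (z1 s - z2 s) \<le> D" and "0 \<le> c"
  shows "exp (- (2 * L * c)) *
           norm (integral {0..c} (\<lambda>s. G (exp (2 * L * s) *\<^sub>R z1 s) - G (exp (2 * L * s) *\<^sub>R z2 s)))
         \<le> D / 2"
proof -
  define g where "g = (\<lambda>s. G (exp (2 * L * s) *\<^sub>R z1 s) - G (exp (2 * L * s) *\<^sub>R z2 s))"
  have "continuous_on UNIV G"
    by (rule lipschitz_on_continuous_on[of L]) (use lip assms(1) in \<open>auto intro!: lipschitz_onI simp: dist_norm\<close>)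
  then have "continuous_on S (\<lambda>s. G (exp (2 * L * s) *\<^sub>R z s))"
    if "continuous_on UNIV z" for z :: "real \<Rightarrow> 'a" and S
    by (rule continuous_on_compose2) (auto intro!: continuous_intros continuous_on_subset[OF that])
  then have "g integrable_on {0..c}"
    unfolding g_def using assms(3,4) by (intro integrable_continuous_interval continuous_intros)
  moreover have "norm (g s) \<le> L * D * exp (2 * L * s)" for s
  proof -
    have "norm (g s) \<le> L * (exp (2 * L * s) * norm (z1 s - z2 s))"
      using lip[of "exp (2 * L * s) *\<^sub>R z1 s" "exp (2 * L * s) *\<^sub>R z2 s"]
      by (simp add: g_def flip: scaleR_diff_right)
    also have "\<dots> \<le> L * D * exp (2 * L * s)"
      using D[of s] assms(1) by (simp add: mult_left_mono)
    finally show ?thesis .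
  qed
  moreover have integral: "((\<lambda>s. L * D * exp (2 * L * s)) has_integral
                   D * exp (2 * L * c) / 2 - D * exp (2 * L * 0) / 2) {0..c}"
    using assms(1)
    by (intro fundamental_theorem_of_calculus[OF \<open>0 \<le> c\<close>])
      (auto intro!: derivative_eq_intros simp flip: has_real_derivative_iff_has_vector_derivative)
  ultimately have "norm (integral {0..c} g) \<le> integral {0..c} (\<lambda>s. L * D * exp (2 * L * s))"
    by (intro integral_norm_bound_integral has_integral_integrable[OF integral])
  also have "\<dots> = D * exp (2 * L * c) / 2 - D / 2"
    using integral_unique[OF integral] by simp
  finally have "exp (- (2 * L * c)) * norm (integral {0..c} g)
                \<le> exp (- (2 * L * c)) * (D * exp (2 * L * c) / 2 - D / 2)"
    by (rule mult_left_mono) simp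
  also have "\<dots> = D / 2 - D * exp (- (2 * L * c)) / 2"
    by (simp add: field_simps exp_minus)
  also have "\<dots> \<le> D / 2"
    using order_trans[OF norm_ge_zero D[of 0]] by simp
  finally show ?thesis
    unfolding g_def .
qed

text \<open>The Picard operator of \<open>y' = G y, y 0 = x0\<close> on \<open>[0, T]\<close>, written for the rescaled unknown
  \<open>z t = exp (- 2 M t) y t\<close> and extended constantly outside \<open>[0, T]\<close>. For an \<open>M\<close>-Lipschitz \<open>G\<close> the
  rescaling makes it a contraction for the sup norm on the whole interval (Bielecki's trick).\<close>

definition picard_bielecki :: "('a::banach \<Rightarrow> 'a) \<Rightarrow> real \<Rightarrow> real \<Rightarrow> 'a \<Rightarrow> (real \<Rightarrow>\<^sub>C 'a) \<Rightarrow> real \<Rightarrow> 'a" where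
  "picard_bielecki G M T x0 z t =
     exp (- (2 * M * max 0 (min T t))) *\<^sub>R
       (x0 + integral {0..max 0 (min T t)} (\<lambda>s. G (exp (2 * M * s) *\<^sub>R apply_bcontfun z s)))"

lemma continuous_on_bielecki_integrand:
  fixes G :: "'a::banach \<Rightarrow> 'a"
  assumes "continuous_on UNIV G"
  shows "continuous_on S (\<lambda>s. G (exp (2 * M * s) *\<^sub>R apply_bcontfun z s))"
  by (rule continuous_on_compose2[OF assms]) (auto intro!: continuous_intros)

lemma picard_bielecki_bcontfun:
  assumes "continuous_on UNIV G" "0 \<le> T"
  shows "picard_bielecki G M T x0 z \<in> bcontfun"
proof -
  define h where "h u = exp (- (2 * M * u)) *\<^sub>R
                          (x0 + integral {0..u} (\<lambda>s. G (exp (2 * M * s) *\<^sub>R apply_bcontfun z s)))" for u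
  have "continuous_on {0..T} h"
    unfolding h_def
    by (intro continuous_intros indefinite_integral_continuous_1 integrable_continuous_interval
        continuous_on_bielecki_integrand assms(1))
  then obtain B where B: "\<forall>v\<in>h ` {0..T}. norm v \<le> B"
    using compact_continuous_image[OF \<open>continuous_on {0..T} h\<close> compact_Icc] compact_imp_bounded bounded_iff
    by metis
  have "continuous_on UNIV (\<lambda>t. h (max 0 (min T t)))"
    by (rule continuous_on_compose2[OF \<open>continuous_on {0..T} h\<close>]) (use assms(2) in \<open>auto intro!: continuous_intros\<close>)
  then have "(\<lambda>t. h (max 0 (min T t))) \<in> bcontfun"
    by (rule bcontfun_normI) (use B assms(2) in auto)
  then show ?thesis
    by (simp add: picard_bielecki_def[abs_def] h_def)
qed

lemma picard_bielecki_contraction: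
  assumes "0 < M" and lip: "\<And>u v. norm (G u - G v) \<le> M * norm (u - v)" and "0 \<le> T"
  shows "dist (Bcontfun (picard_bielecki G M T x0 z1)) (Bcontfun (picard_bielecki G M T x0 z2))
         \<le> 1/2 * dist z1 z2"
proof (rule dist_bound)
  fix t
  define c where "c = max 0 (min T t)"
  have "continuous_on UNIV G"
    by (rule lipschitz_on_continuous_on[of M]) (use lip \<open>0 < M\<close> in \<open>auto intro!: lipschitz_onI simp: dist_norm\<close>)
  then have "apply_bcontfun (Bcontfun (picard_bielecki G M T x0 z)) t = picard_bielecki G M T x0 z t" for z
    using picard_bielecki_bcontfun[OF \<open>continuous_on UNIV G\<close> \<open>0 \<le> T\<close>] by (simp add: Bcontfun_inverse)
  moreover have "picard_bielecki G M T x0 z1 t - picard_bielecki G M T x0 z2 t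
      = exp (- (2 * M * c)) *\<^sub>R integral {0..c} (\<lambda>s.
          G (exp (2 * M * s) *\<^sub>R apply_bcontfun z1 s) - G (exp (2 * M * s) *\<^sub>R apply_bcontfun z2 s))"
    using \<open>continuous_on UNIV G\<close>
    by (simp add: picard_bielecki_def c_def integral_diff integrable_continuous_interval
        continuous_on_bielecki_integrand scaleR_diff_right scaleR_add_right)
  moreover have "exp (- (2 * M * c)) * norm (integral {0..c} (\<lambda>s.
          G (exp (2 * M * s) *\<^sub>R apply_bcontfun z1 s) - G (exp (2 * M * s) *\<^sub>R apply_bcontfun z2 s)))
        \<le> dist z1 z2 / 2"
  proof (rule bielecki_integral_estimate[OF \<open>0 < M\<close> lip])
    show "norm (apply_bcontfun z1 s - apply_bcontfun z2 s) \<le> dist z1 z2" for s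
      using dist_bounded[of z1 s z2] by (simp add: dist_norm)
  qed (use \<open>0 \<le> T\<close> in \<open>auto simp: c_def\<close>)
  ultimately show "dist (apply_bcontfun (Bcontfun (picard_bielecki G M T x0 z1)) t)
                        (apply_bcontfun (Bcontfun (picard_bielecki G M T x0 z2)) t) \<le> 1/2 * dist z1 z2"
    by (simp add: dist_norm)
qed

lemma lipschitz_field_has_solution:
  fixes G :: "'a::banach \<Rightarrow> 'a"
  assumes "L-lipschitz_on UNIV G" "0 \<le> T"
  shows "\<exists>y. y 0 = x0 \<and> solution_on G y {0..T}"
proof -
  define M where "M = L + 1"
  have "0 < M"
    using lipschitz_on_nonneg[OF assms(1)] by (simp add: M_def)
  have lip: "norm (G u - G v) \<le> M * norm (u - v)" for u v
    using lipschitz_onD[OF assms(1) UNIV_I UNIV_I, of u v] norm_ge_zero[of "u - v"]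
    unfolding M_def dist_norm distrib_right mult_1 by linarith
  have "continuous_on UNIV G"
    using assms(1) by (rule lipschitz_on_continuous_on)
  obtain z where z: "Bcontfun (picard_bielecki G M T x0 z) = z"
    using banach_fix_type[of "1/2" "\<lambda>z. Bcontfun (picard_bielecki G M T x0 z)"]
      picard_bielecki_contraction[OF \<open>0 < M\<close> lip \<open>0 \<le> T\<close>] by auto
  define y where "y t = x0 + integral {0..t} (\<lambda>s. G (exp (2 * M * s) *\<^sub>R apply_bcontfun z s))" for t
  have y: "exp (2 * M * t) *\<^sub>R apply_bcontfun z t = y t" if "t \<in> {0..T}" for t
  proof -
    have "apply_bcontfun z t = picard_bielecki G M T x0 z t"
      using z picard_bielecki_bcontfun[OF \<open>continuous_on UNIV G\<close> \<open>0 \<le> T\<close>, of M x0 z]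
      by (metis Bcontfun_inverse)
    then show ?thesis
      using that by (simp add: picard_bielecki_def y_def flip: exp_add)
  qed
  have "solution_on G y {0..T}"
    unfolding solution_on_def
  proof
    fix t assume t: "t \<in> {0..T}"
    have "(y has_vector_derivative 0 + G (exp (2 * M * t) *\<^sub>R apply_bcontfun z t)) (at t within {0..T})"
      unfolding y_def
      by (rule has_vector_derivative_add[OF has_vector_derivative_const integral_has_vector_derivative[OF
            continuous_on_bielecki_integrand[OF \<open>continuous_on UNIV G\<close>] t]])
    then show "(y has_vector_derivative G (y t)) (at t within {0..T})"
      by (simp only: add_0_left y[OF t])
  qed
  moreover have "y 0 = x0"
    by (simp add: y_def)
  ultimately show ?thesis
    by blast
qed

lemma stable_solution_in_ball_exists:
  fixes F :: "'a::euclidean_space \<Rightarrow> 'a"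
  assumes lip: "L-lipschitz_on (cball E \<rho>) F" and "0 < \<rho>" "0 \<le> T"
    and stable: "\<forall>x T. 0 \<le> T \<longrightarrow> solution_on F x {0..T} \<longrightarrow> dist (x 0) E < d
                   \<longrightarrow> (\<forall>t\<in>{0..T}. dist (x t) E < \<rho>)"
    and "dist p E < d" "dist p E < \<rho>"
  obtains y where "y 0 = p" "solution_on F y {0..T}" "\<forall>t\<in>{0..T}. dist (y t) E < \<rho>"
proof -
  \<comment> \<open>Outside the ball, follow the field at the nearest point of the ball; this is globally Lipschitz.\<close>
  define G where "G = (\<lambda>z. F (closest_point (cball E \<rho>) z))"
  have "1-lipschitz_on UNIV (closest_point (cball E \<rho>))"
    using closest_point_lipschitz[of "cball E \<rho>"] \<open>0 < \<rho>\<close> by (intro lipschitz_onI) auto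
  moreover have "closest_point (cball E \<rho>) ` UNIV \<subseteq> cball E \<rho>"
    using closest_point_in_set[of "cball E \<rho>"] \<open>0 < \<rho>\<close> by auto
  then have "L-lipschitz_on (closest_point (cball E \<rho>) ` UNIV) F"
    by (rule lipschitz_on_subset[OF lip])
  ultimately have "(L * 1)-lipschitz_on UNIV G"
    unfolding G_def by (rule lipschitz_on_compose2)
  then obtain y where "y 0 = p" and soly: "solution_on G y {0..T}"
    using lipschitz_field_has_solution \<open>0 \<le> T\<close> by blast
  have solF: "solution_on F y {0..S}" if "S \<le> T" "\<forall>t\<in>{0..S}. dist (y t) E \<le> \<rho>" for S
    using solution_on_subset[OF soly, of "{0..S}"] that
    by (auto simp: solution_on_def G_def closest_point_self dist_commute)
  have "\<forall>t\<in>{0..T}. dist (y t) E < \<rho>"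
  proof (rule ccontr)
    assume "\<not> (\<forall>t\<in>{0..T}. dist (y t) E < \<rho>)"
    then obtain t\<^sub>0 where "t\<^sub>0 \<in> {0..T}" "\<rho> \<le> dist (y t\<^sub>0) E"
      by force
    moreover have "continuous_on {0..T} (\<lambda>t. dist (y t) E)"
      using solution_on_continuous_on[OF soly] by (intro continuous_intros)
    ultimately obtain t\<^sub>1 where t\<^sub>1: "t\<^sub>1 \<in> {0..T}" "dist (y t\<^sub>1) E = \<rho>"
      "\<forall>t\<in>{0..<t\<^sub>1}. dist (y t) E < \<rho>"
      using first_hitting_time[of T "\<lambda>t. dist (y t) E" \<rho>] \<open>y 0 = p\<close> \<open>dist p E < \<rho>\<close> by metis
    then have "solution_on F y {0..t\<^sub>1}"
      by (intro solF) (auto simp: less_eq_real_def)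
    then show False
      using stable t\<^sub>1 \<open>y 0 = p\<close> \<open>dist p E < d\<close> by fastforce
  qed
  moreover from this have "solution_on F y {0..T}"
    by (intro solF) (auto simp: less_eq_real_def)
  ultimately show thesis
    using that \<open>y 0 = p\<close> by blast
qed

section \<open>Linearised stability with a weighted quadratic form\<close>

definition weighted_inner :: "real \<Rightarrow> real \<times> real \<Rightarrow> real \<times> real \<Rightarrow> real" where
  "weighted_inner k u v = fst u * fst v + k * (snd u * snd v)"

lemma weighted_inner_bounds:
  fixes u v :: "real \<times> real"
  assumes "0 < k"
  shows "min 1 k * (norm v)^2 \<le> weighted_inner k v v"
    and "weighted_inner k v v \<le> max 1 k * (norm v)^2"
    and "\<bar>weighted_inner k u v\<bar> \<le> max 1 k * (norm u * norm v)"
proof -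
  have norm_sq: "(norm w)^2 = (fst w)^2 + (snd w)^2" for w :: "real \<times> real"
    by (simp add: norm_prod_def)
  have "min 1 k * (fst v)^2 \<le> (fst v)^2" "min 1 k * (snd v)^2 \<le> k * (snd v)^2"
    using assms by (auto intro: mult_right_mono mult_left_le_one_le)
  then show "min 1 k * (norm v)^2 \<le> weighted_inner k v v"
    unfolding weighted_inner_def norm_sq by (simp only: distrib_left power2_eq_square)
  have "(fst v)^2 \<le> max 1 k * (fst v)^2" "k * (snd v)^2 \<le> max 1 k * (snd v)^2"
    by (auto intro: mult_right_mono simp: mult_le_cancel_right1)
  then show "weighted_inner k v v \<le> max 1 k * (norm v)^2"
    unfolding weighted_inner_def norm_sq by (simp only: distrib_left power2_eq_square)
  have "\<bar>weighted_inner k u v\<bar> \<le> \<bar>fst u\<bar> * \<bar>fst v\<bar> + k * (\<bar>snd u\<bar> * \<bar>snd v\<bar>)"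
    unfolding weighted_inner_def using assms
    by (metis abs_mult abs_of_pos abs_triangle_ineq)
  also have "\<dots> \<le> max 1 k * (\<bar>fst u\<bar> * \<bar>fst v\<bar> + \<bar>snd u\<bar> * \<bar>snd v\<bar>)"
    using mult_right_mono[of 1 "max 1 k" "\<bar>fst u\<bar> * \<bar>fst v\<bar>"]
      mult_right_mono[of k "max 1 k" "\<bar>snd u\<bar> * \<bar>snd v\<bar>"]
    by (simp add: distrib_left)
  also have "\<bar>fst u\<bar> * \<bar>fst v\<bar> + \<bar>snd u\<bar> * \<bar>snd v\<bar>
             = inner (\<bar>fst u\<bar>, \<bar>snd u\<bar>) (\<bar>fst v\<bar>, \<bar>snd v\<bar>)"
    by simp
  also have "\<dots> \<le> norm (\<bar>fst u\<bar>, \<bar>snd u\<bar>) * norm (\<bar>fst v\<bar>, \<bar>snd v\<bar>)"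
    by (rule norm_cauchy_schwarz)
  also have "\<dots> = norm u * norm v"
    by (simp add: norm_prod_def)
  finally show "\<bar>weighted_inner k u v\<bar> \<le> max 1 k * (norm u * norm v)"
    by (simp add: mult_left_mono)
qed

lemma has_real_derivative_weighted_sq:
  fixes x :: "real \<Rightarrow> real \<times> real"
  assumes "(x has_vector_derivative x') (at t within S)"
  shows "((\<lambda>t. weighted_inner k (x t - E) (x t - E)) has_real_derivative
            2 * weighted_inner k (x t - E) x') (at t within S)"
proof -
  have "((\<lambda>t. fst (x t - E)) has_real_derivative fst x') (at t within S)"
    "((\<lambda>t. snd (x t - E)) has_real_derivative snd x') (at t within S)"
    using bounded_linear.has_vector_derivative[OF bounded_linear_fst, of "\<lambda>t. x t - E"]
      bounded_linear.has_vector_derivative[OF bounded_linear_snd, of "\<lambda>t. x t - E"]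
      has_vector_derivative_diff_const[THEN iffD2, OF assms]
    by (simp_all add: has_real_derivative_iff_has_vector_derivative)
  then have "((\<lambda>t. fst (x t - E) * fst (x t - E) + k * (snd (x t - E) * snd (x t - E))) has_real_derivative
      fst x' * fst (x t - E) + fst x' * fst (x t - E) + k * (snd x' * snd (x t - E) + snd x' * snd (x t - E)))
      (at t within S)"
    by (intro DERIV_add DERIV_mult DERIV_cmult)
  then show ?thesis
    by (simp add: weighted_inner_def algebra_simps)
qed

lemma weighted_lyapunov_inequality_of_linearization:
  fixes F J :: "real \<times> real \<Rightarrow> real \<times> real"
  assumes "(F has_derivative J) (at E)" "F E = 0" "0 < k" "0 < \<gamma>"
    and J: "\<And>v. weighted_inner k v (J v) \<le> - \<gamma> * weighted_inner k v v"
  obtains \<rho> where "0 < \<rho>"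
    "\<And>z. dist z E < \<rho> \<Longrightarrow> weighted_inner k (z - E) (F z) \<le> - (\<gamma> / 2) * weighted_inner k (z - E) (z - E)"
proof -
  \<comment> \<open>With this \<open>\<epsilon>\<close> the remainder of the linearisation costs at most half of the decay rate.\<close>
  define \<epsilon> where "\<epsilon> = \<gamma> * min 1 k / (2 * max 1 k)"
  have "0 < \<epsilon>"
    using assms(3,4) by (simp add: \<epsilon>_def)
  then obtain \<rho> where "0 < \<rho>"
    and \<rho>: "\<And>z. norm (z - E) < \<rho> \<Longrightarrow> norm (F z - J (z - E)) \<le> \<epsilon> * norm (z - E)"
    using assms(1,2) unfolding has_derivative_at_alt by force
  show thesis
  proof (rule that[OF \<open>0 < \<rho>\<close>])
    fix z assume "dist z E < \<rho>"
    define v where "v = z - E"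
    have "\<bar>weighted_inner k v (F z - J v)\<bar> \<le> max 1 k * (norm v * (\<epsilon> * norm v))"
      using weighted_inner_bounds(3)[OF assms(3), of v "F z - J v"] \<rho>[of z] \<open>dist z E < \<rho>\<close>
      by (smt (verit, best) dist_norm max.cobounded1 mult_left_mono norm_ge_zero v_def)
    also have "\<dots> = \<gamma> / 2 * (min 1 k * (norm v)^2)"
      by (simp add: \<epsilon>_def power2_eq_square)
    also have "\<dots> \<le> \<gamma> / 2 * weighted_inner k v v"
      using weighted_inner_bounds(1)[OF assms(3)] assms(4) by simp
    finally have "\<bar>weighted_inner k v (F z - J v)\<bar> \<le> \<gamma> / 2 * weighted_inner k v v" .
    moreover have "weighted_inner k v (F z) = weighted_inner k v (J v) + weighted_inner k v (F z - J v)"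
      by (simp add: weighted_inner_def algebra_simps)
    ultimately show "weighted_inner k (z - E) (F z) \<le> - (\<gamma> / 2) * weighted_inner k (z - E) (z - E)"
      using J[of v] unfolding v_def by linarith
  qed
qed

lemma weighted_sq_decay_along_solution:
  fixes F :: "real \<times> real \<Rightarrow> real \<times> real"
  assumes "0 < k" "0 < \<rho>" "0 \<le> \<gamma>"
    and lyap: "\<And>z. dist z E < \<rho> \<Longrightarrow>
                 weighted_inner k (z - E) (F z) \<le> - \<gamma> * weighted_inner k (z - E) (z - E)"
    and sol: "solution_on F x {0..T}" and "0 \<le> T"
    and start: "weighted_inner k (x 0 - E) (x 0 - E) < min 1 k * \<rho>^2"
  shows "\<forall>t\<in>{0..T}. weighted_inner k (x t - E) (x t - E)
                    \<le> weighted_inner k (x 0 - E) (x 0 - E) * exp (- (2 * \<gamma>) * t)"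
proof (rule exp_decay_while_below[where W = "\<lambda>t. weighted_inner k (x t - E) (x t - E)"
      and W' = "\<lambda>t. 2 * weighted_inner k (x t - E) (F (x t))" and R = "min 1 k * \<rho>^2"])
  show "continuous_on {0..T} (\<lambda>t. weighted_inner k (x t - E) (x t - E))"
    using solution_on_continuous_on[OF sol] unfolding weighted_inner_def
    by (intro continuous_intros)
  show "0 < min 1 k * \<rho>^2" "0 \<le> 2 * \<gamma>"
    using assms(1-3) by auto
  show "0 \<le> T" "weighted_inner k (x 0 - E) (x 0 - E) < min 1 k * \<rho>^2"
    by (fact \<open>0 \<le> T\<close> start)+
  fix t assume t: "t \<in> {0..T}" and small: "weighted_inner k (x t - E) (x t - E) < min 1 k * \<rho>^2"
  have "min 1 k * (norm (x t - E))^2 < min 1 k * \<rho>^2"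
    using weighted_inner_bounds(1)[OF assms(1), of "x t - E"] small by linarith
  then have "(norm (x t - E))^2 < \<rho>^2"
    using assms(1) by simp
  then have "dist (x t) E < \<rho>"
    using power_less_imp_less_base[of "norm (x t - E)" 2 \<rho>] assms(2) by (simp add: dist_norm)
  then show "((\<lambda>t. weighted_inner k (x t - E) (x t - E)) has_real_derivative
               2 * weighted_inner k (x t - E) (F (x t))) (at t within {0..T})
             \<and> 2 * weighted_inner k (x t - E) (F (x t)) \<le> - (2 * \<gamma>) * weighted_inner k (x t - E) (x t - E)"
    using has_real_derivative_weighted_sq sol t lyap[of "x t"] unfolding solution_on_def by auto
qed

lemma exponential_estimate_of_linearization:
  fixes F J :: "real \<times> real \<Rightarrow> real \<times> real"
  assumes "(F has_derivative J) (at E)" "F E = 0" "0 < k" "0 < \<gamma>"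
    and "\<And>v. weighted_inner k v (J v) \<le> - \<gamma> * weighted_inner k v v"
  obtains \<eta> C where "0 < \<eta>" "0 \<le> C"
    "\<And>x T t. solution_on F x {0..T} \<Longrightarrow> 0 \<le> T \<Longrightarrow> dist (x 0) E < \<eta> \<Longrightarrow> t \<in> {0..T} \<Longrightarrow>
       dist (x t) E \<le> C * dist (x 0) E * exp (- (\<gamma> / 2) * t)"
proof -
  obtain \<rho> where "0 < \<rho>" and lyap: "\<And>z. dist z E < \<rho> \<Longrightarrow>
      weighted_inner k (z - E) (F z) \<le> - (\<gamma> / 2) * weighted_inner k (z - E) (z - E)"
    using weighted_lyapunov_inequality_of_linearization[OF assms] by blast
  define m where "m = min 1 k"
  define M where "M = max 1 k"
  have "0 < m" "m \<le> M"
    using assms(3) by (auto simp: m_def M_def)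
  show thesis
  proof (rule that[of "\<rho> * sqrt (m / M)" "sqrt (M / m)"])
    show "0 < \<rho> * sqrt (m / M)" "0 \<le> sqrt (M / m)"
      using \<open>0 < \<rho>\<close> \<open>0 < m\<close> \<open>m \<le> M\<close> by simp_all
    fix x T t assume sol: "solution_on F x {0..T}" and "0 \<le> T" and t: "t \<in> {0..T}"
      and close: "dist (x 0) E < \<rho> * sqrt (m / M)"
    have "M * (dist (x 0) E)^2 < M * (\<rho> * sqrt (m / M))^2"
      using close \<open>0 < m\<close> \<open>m \<le> M\<close> by (intro mult_strict_left_mono power_strict_mono) auto
    also have "\<dots> = m * \<rho>^2"
      using \<open>0 < m\<close> \<open>m \<le> M\<close> by (simp add: power_mult_distrib)
    finally have start: "weighted_inner k (x 0 - E) (x 0 - E) < m * \<rho>^2"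
      using weighted_inner_bounds(2)[OF assms(3), of "x 0 - E"] by (simp add: M_def dist_norm)
    have "m * (dist (x t) E)^2 \<le> weighted_inner k (x t - E) (x t - E)"
      using weighted_inner_bounds(1)[OF assms(3)] by (simp add: m_def dist_norm)
    also have "\<dots> \<le> weighted_inner k (x 0 - E) (x 0 - E) * exp (- (2 * (\<gamma> / 2)) * t)"
      using weighted_sq_decay_along_solution[OF assms(3) \<open>0 < \<rho>\<close> _ lyap sol \<open>0 \<le> T\<close>] start t assms(4)
      by (simp add: m_def)
    also have "\<dots> \<le> M * (dist (x 0) E)^2 * exp (- (2 * (\<gamma> / 2)) * t)"
      using weighted_inner_bounds(2)[OF assms(3)] by (simp add: M_def dist_norm)
    finally have sq: "(dist (x t) E)^2 \<le> (sqrt (M / m) * dist (x 0) E * exp (- (\<gamma> / 2) * t))^2"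
      using \<open>0 < m\<close> \<open>m \<le> M\<close>
      by (simp add: power_mult_distrib field_simps flip: exp_of_nat_mult)
    show "dist (x t) E \<le> sqrt (M / m) * dist (x 0) E * exp (- (\<gamma> / 2) * t)"
      using power2_le_imp_le[OF sq] \<open>0 < m\<close> \<open>m \<le> M\<close> by simp
  qed
qed

lemma lyapunov_stable_of_exponential_estimate:
  assumes "0 < \<eta>" "0 \<le> \<gamma>" "0 \<le> C"
    and estimate: "\<And>x T t. solution_on F x {0..T} \<Longrightarrow> 0 \<le> T \<Longrightarrow> dist (x 0) E < \<eta> \<Longrightarrow> t \<in> {0..T} \<Longrightarrow>
                     dist (x t) E \<le> C * dist (x 0) E * exp (- \<gamma> * t)"
  shows "lyapunov_stable F E"
  unfolding lyapunov_stable_def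
proof (intro allI impI)
  fix \<epsilon> :: real assume "0 < \<epsilon>"
  define d where "d = min \<eta> (\<epsilon> / (C + 1))"
  have "dist (x t) E < \<epsilon>"
    if "0 \<le> T" "solution_on F x {0..T}" "dist (x 0) E < d" "t \<in> {0..T}" for x T t
  proof -
    have "dist (x t) E \<le> C * dist (x 0) E * exp (- \<gamma> * t)"
      using estimate that by (simp add: d_def)
    also have "\<dots> \<le> C * dist (x 0) E"
      using that(4) assms(2,3) by (simp add: mult_left_le)
    also have "\<dots> \<le> C * (\<epsilon> / (C + 1))"
      using that(3) assms(3) by (intro mult_left_mono) (auto simp: d_def)
    also have "\<dots> < \<epsilon>"
      using \<open>0 < \<epsilon>\<close> assms(3) by (simp add: field_simps)
    finally show ?thesis .
  qed
  moreover have "0 < d"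
    using \<open>0 < \<epsilon>\<close> assms(1,3) by (simp add: d_def)
  ultimately show "\<exists>d>0. \<forall>x T. 0 \<le> T \<longrightarrow> solution_on F x {0..T} \<longrightarrow> dist (x 0) E < d
                     \<longrightarrow> (\<forall>t\<in>{0..T}. dist (x t) E < \<epsilon>)"
    by blast
qed

lemma locally_attractive_of_exponential_estimate:
  assumes "0 < \<eta>" "0 < \<gamma>"
    and estimate: "\<And>x T t. solution_on F x {0..T} \<Longrightarrow> 0 \<le> T \<Longrightarrow> dist (x 0) E < \<eta> \<Longrightarrow> t \<in> {0..T} \<Longrightarrow>
                     dist (x t) E \<le> C * dist (x 0) E * exp (- \<gamma> * t)"
  shows "locally_attractive F E"
  unfolding locally_attractive_def
proof (intro exI[of _ \<eta>] conjI allI impI)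
  fix x assume sol: "solution_on F x {0..}" and close: "dist (x 0) E < \<eta>"
  have "filterlim (\<lambda>t. - \<gamma> * t) at_bot at_top"
    by (rule filterlim_tendsto_neg_mult_at_bot[OF tendsto_const _ filterlim_ident]) (use assms(2) in simp)
  then have "((\<lambda>t. exp (- \<gamma> * t)) \<longlongrightarrow> 0) at_top"
    by (rule filterlim_compose[OF exp_at_bot])
  then have lim: "((\<lambda>t. C * dist (x 0) E * exp (- \<gamma> * t)) \<longlongrightarrow> 0) at_top"
    by (rule tendsto_mult_right_zero)
  have bound: "\<forall>\<^sub>F t in at_top. dist (x t) E \<le> C * dist (x 0) E * exp (- \<gamma> * t)"
  proof (rule eventually_mono[OF eventually_ge_at_top[of 0]])
    fix t :: real assume "0 \<le> t"
    then show "dist (x t) E \<le> C * dist (x 0) E * exp (- \<gamma> * t)"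
      using estimate[of x t t] solution_on_subset[OF sol, of "{0..t}"] close by auto
  qed
  have "((\<lambda>t. dist (x t) E) \<longlongrightarrow> 0) at_top"
    by (rule tendsto_sandwich[OF _ bound tendsto_const lim]) simp
  then show "(x \<longlongrightarrow> E) at_top"
    by (rule tendsto_dist_iff[THEN iffD2])
qed (use assms(1) in simp)

lemma triangular_weighted_lyapunov:
  fixes A B D :: real
  assumes "A < 0" "D < 0"
  obtains k \<gamma> where "0 < k" "0 < \<gamma>"
    "\<And>v. weighted_inner k v (A * fst v + B * snd v, D * snd v) \<le> - \<gamma> * weighted_inner k v v"
proof -
  \<comment> \<open>AM-GM bounds the cross term \<open>B u p\<close> by half the decay in \<open>u\<close> plus \<open>B\<^sup>2 p\<^sup>2 / (- 2 A)\<close>;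
    this weight makes half the decay in \<open>p\<close> absorb the latter.\<close>
  define k where "k = B^2 / (A * D) + 1"
  define \<gamma> where "\<gamma> = min (- A) (- D) / 2"
  have "0 < k" "0 < \<gamma>"
    using assms by (auto simp: k_def \<gamma>_def intro!: add_nonneg_pos divide_nonneg_pos mult_neg_neg)
  moreover have "weighted_inner k v (A * fst v + B * snd v, D * snd v) \<le> - \<gamma> * weighted_inner k v v" for v
  proof -
    obtain u p where v: "v = (u, p)"
      by fastforce
    have "B * u * p \<le> - A * u^2 / 2 + B^2 * p^2 / (- 2 * A)"
    proof -
      have "0 \<le> (A * u + B * p)^2 / (- 2 * A)"
        using assms(1) by (simp add: divide_nonneg_neg)
      also have "(A * u + B * p)^2 / (- 2 * A) = - A * u^2 / 2 - B * u * p + B^2 * p^2 / (- 2 * A)"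
        using assms(1) by (simp add: field_simps power2_eq_square)
      finally show ?thesis
        by simp
    qed
    moreover have "- k * D * p^2 / 2 = B^2 * p^2 / (- 2 * A) - D * p^2 / 2"
      using assms by (simp add: k_def field_simps)
    moreover have "0 \<le> - D * p^2 / 2"
      using assms(2) by (simp add: mult_nonpos_nonneg)
    moreover have "\<gamma> * u^2 \<le> - A * u^2 / 2" "\<gamma> * (k * p^2) \<le> - D * (k * p^2) / 2"
      using mult_right_mono[of \<gamma> "- A / 2" "u^2"] mult_right_mono[of \<gamma> "- D / 2" "k * p^2"] \<open>0 < k\<close>
      by (auto simp: \<gamma>_def)
    ultimately show ?thesis
      unfolding v weighted_inner_def by (simp add: power2_eq_square algebra_simps)
  qed
  ultimately show thesis
    by (rule that)
qed

section \<open>Instability from transversal growth\<close>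

lemma snd_exp_growth_along_solution:
  fixes F :: "real \<times> real \<Rightarrow> real \<times> real"
  assumes sol: "solution_on F x {0..T}" and "0 \<le> T"
    and growth: "\<And>z. snd (F z) = snd z * \<phi> z"
    and "continuous_on (x ` {0..T}) \<phi>" and "\<And>t. t \<in> {0..T} \<Longrightarrow> \<mu> \<le> \<phi> (x t)"
    and "0 \<le> snd (x 0)"
  shows "snd (x 0) * exp (\<mu> * T) \<le> snd (x T)"
proof -
  have cont: "continuous_on {0..T} (\<lambda>t. \<phi> (x t))"
    by (rule continuous_on_compose2[OF assms(4) solution_on_continuous_on[OF sol]]) auto
  have "snd (x T) = snd (x 0) * exp (integral {0..T} (\<lambda>t. \<phi> (x t)))"
  proof (rule linear_ode_explicit_solution[OF \<open>0 \<le> T\<close> cont])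
    fix t assume "t \<in> {0..T}"
    then have "(x has_vector_derivative F (x t)) (at t within {0..T})"
      using sol unfolding solution_on_def by blast
    from bounded_linear.has_vector_derivative[OF bounded_linear_snd this]
    show "((\<lambda>t. snd (x t)) has_real_derivative \<phi> (x t) * snd (x t)) (at t within {0..T})"
      by (simp add: has_real_derivative_iff_has_vector_derivative growth mult.commute)
  qed
  moreover have "integral {0..T} (\<lambda>_. \<mu>) \<le> integral {0..T} (\<lambda>t. \<phi> (x t))"
    by (rule integral_le) (use cont assms(5) in \<open>auto intro: integrable_continuous_interval\<close>)
  then have "\<mu> * T \<le> integral {0..T} (\<lambda>t. \<phi> (x t))"
    using \<open>0 \<le> T\<close> by (simp add: mult.commute)
  ultimately show ?thesis
    using assms(6) by (simp add: mult_left_mono)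
qed

lemma not_lyapunov_stable_of_transversal_growth:
  fixes F :: "real \<times> real \<Rightarrow> real \<times> real"
  assumes lip: "L-lipschitz_on (cball E r) F" and "0 < r" and "snd E = 0"
    and growth: "\<And>z. snd (F z) = snd z * \<phi> z"
    and "continuous_on (cball E r) \<phi>" and "0 < \<phi> E"
  shows "\<not> lyapunov_stable F E"
proof
  assume "lyapunov_stable F E"
  define \<mu> where "\<mu> = \<phi> E / 2"
  have "0 < \<mu>"
    using assms(6) by (simp add: \<mu>_def)
  have "isCont \<phi> E"
    using assms(5) \<open>0 < r\<close> by (intro continuous_on_interior[of "cball E r"]) auto
  then obtain d\<^sub>\<phi> where "0 < d\<^sub>\<phi>" and d\<^sub>\<phi>: "\<And>z. dist z E < d\<^sub>\<phi> \<Longrightarrow> \<bar>\<phi> z - \<phi> E\<bar> < \<mu>"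
    using \<open>0 < \<mu>\<close> unfolding continuous_at_eps_delta dist_real_def by blast
  define \<rho> where "\<rho> = min (d\<^sub>\<phi> / 2) r"
  have "0 < \<rho>" "cball E \<rho> \<subseteq> cball E r"
    using \<open>0 < d\<^sub>\<phi>\<close> \<open>0 < r\<close> by (auto simp: \<rho>_def)
  have rate: "\<mu> \<le> \<phi> z" if "z \<in> cball E \<rho>" for z
    using d\<^sub>\<phi>[of z] that \<open>0 < d\<^sub>\<phi>\<close> abs_ge_minus_self[of "\<phi> z - \<phi> E"]
    by (auto simp: \<rho>_def \<mu>_def dist_commute)
  obtain d where "0 < d" and stable: "\<forall>x T. 0 \<le> T \<longrightarrow> solution_on F x {0..T} \<longrightarrow> dist (x 0) E < d
      \<longrightarrow> (\<forall>t\<in>{0..T}. dist (x t) E < \<rho>)"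
    using \<open>lyapunov_stable F E\<close> \<open>0 < \<rho>\<close> unfolding lyapunov_stable_def by blast
  \<comment> \<open>Start at height \<open>P\<^sub>0\<close> above \<open>E\<close>; growth at rate \<open>\<mu>\<close> reaches height \<open>\<rho>\<close> by time \<open>T\<close>.\<close>
  define P\<^sub>0 where "P\<^sub>0 = min d \<rho> / 2"
  define T where "T = ln (\<rho> / P\<^sub>0) / \<mu>"
  have "0 < P\<^sub>0" "P\<^sub>0 < d" "P\<^sub>0 < \<rho>"
    using \<open>0 < d\<close> \<open>0 < \<rho>\<close> by (auto simp: P\<^sub>0_def)
  then have "0 \<le> T" "P\<^sub>0 * exp (\<mu> * T) = \<rho>"
    using \<open>0 < \<mu>\<close> \<open>0 < \<rho>\<close> by (auto simp: T_def)
  have "dist (E + (0, P\<^sub>0)) E < d" "dist (E + (0, P\<^sub>0)) E < \<rho>"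
    using \<open>0 < P\<^sub>0\<close> \<open>P\<^sub>0 < d\<close> \<open>P\<^sub>0 < \<rho>\<close> by (simp_all add: dist_norm)
  then obtain y where y: "y 0 = E + (0, P\<^sub>0)" "solution_on F y {0..T}" "\<forall>t\<in>{0..T}. dist (y t) E < \<rho>"
    using stable_solution_in_ball_exists[OF lipschitz_on_subset[OF lip \<open>cball E \<rho> \<subseteq> cball E r\<close>]
        \<open>0 < \<rho>\<close> \<open>0 \<le> T\<close> stable] by blast
  have "continuous_on (y ` {0..T}) \<phi>"
    using y(3) \<open>cball E \<rho> \<subseteq> cball E r\<close>
    by (intro continuous_on_subset[OF assms(5)]) (auto simp: dist_commute less_eq_real_def)
  then have "P\<^sub>0 * exp (\<mu> * T) \<le> snd (y T)"
    using snd_exp_growth_along_solution[OF y(2) \<open>0 \<le> T\<close> growth, of \<mu>] y(1,3) rate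
      \<open>0 < P\<^sub>0\<close> \<open>snd E = 0\<close> by (auto simp: dist_commute less_eq_real_def)
  moreover have "snd (y T) < \<rho>"
    using y(3)[rule_format, of T] dist_snd_le[of "y T" E] \<open>0 \<le> T\<close> \<open>snd E = 0\<close>
    by (auto simp: dist_real_def)
  ultimately show False
    using \<open>P\<^sub>0 * exp (\<mu> * T) = \<rho>\<close> by simp
qed

section \<open>The predator-prey system with a weak Allee effect\<close>

definition monod_haldane :: "real \<Rightarrow> real \<Rightarrow> real" where
  "monod_haldane b N = N / (b + N^2)"

definition predator_rate :: "real \<Rightarrow> real \<Rightarrow> real \<Rightarrow> real \<Rightarrow> real" where
  "predator_rate b c \<delta> N = c * monod_haldane b N - \<delta>"

definition prey_rate :: "real \<Rightarrow> real \<Rightarrow> real \<Rightarrow> real \<Rightarrow> real \<Rightarrow> real" where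
  "prey_rate r K h w N = r * (1 - N / K - h / (w + N))"

lemma monod_haldane_denominator:
  fixes b N :: real
  assumes "0 < b"
  shows "0 < b + N^2" "b + N^2 \<noteq> 0"
  using add_pos_nonneg[OF assms zero_le_power2[of N]] by simp_all

lemma continuous_on_monod_haldane [continuous_intros]:
  "0 < b \<Longrightarrow> continuous_on S f \<Longrightarrow> continuous_on S (\<lambda>x. monod_haldane b (f x))"
  unfolding monod_haldane_def
  by (intro continuous_intros) (auto simp: monod_haldane_denominator)

lemma monod_haldane_has_derivative:
  assumes "0 < b"
  shows "(monod_haldane b has_real_derivative (b - N^2) / (b + N^2)^2) (at N)"
proof -
  have "b + N^2 \<noteq> 0"
    using monod_haldane_denominator[OF assms] by simp
  show ?thesis
    unfolding monod_haldane_def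
    apply (rule DERIV_cong)
     apply (auto intro!: derivative_eq_intros simp: \<open>b + N^2 \<noteq> 0\<close>)[1]
    using \<open>b + N^2 \<noteq> 0\<close> by (simp add: divide_simps power2_eq_square)
qed

lemma prey_rate_has_derivative:
  assumes "K \<noteq> 0" "w + N \<noteq> 0"
  shows "(prey_rate r K h w has_real_derivative r * (h / (w + N)^2 - 1 / K)) (at N)"
  unfolding prey_rate_def
  apply (rule DERIV_cong)
   apply (auto intro!: derivative_eq_intros simp: assms)[1]
  using assms by (simp add: divide_simps power2_eq_square)

lemma pp_field_eq:
  "pp_field r K h w a b c \<delta> =
     (\<lambda>z. (fst z * prey_rate r K h w (fst z) - a * snd z * monod_haldane b (fst z),
           snd z * predator_rate b c \<delta> (fst z)))"
  by (simp add: fun_eq_iff pp_field_def prey_rate_def monod_haldane_def predator_rate_def algebra_simps)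

definition pp_field_dN :: "real \<Rightarrow> real \<Rightarrow> real \<Rightarrow> real \<Rightarrow> real \<Rightarrow> real \<Rightarrow> real \<Rightarrow> real \<Rightarrow> real \<Rightarrow> real \<times> real" where
  "pp_field_dN r K h w a b c N P =
     (prey_rate r K h w N + N * r * (h / (w + N)^2 - 1 / K) - a * P * (b - N^2) / (b + N^2)^2,
      c * P * (b - N^2) / (b + N^2)^2)"

definition pp_field_dP :: "real \<Rightarrow> real \<Rightarrow> real \<Rightarrow> real \<Rightarrow> real \<Rightarrow> real \<times> real" where
  "pp_field_dP a b c \<delta> N = (- a * monod_haldane b N, predator_rate b c \<delta> N)"

lemma pp_field_has_derivative:
  assumes "K \<noteq> 0" "0 < b" "w + N \<noteq> 0"
  shows "(pp_field r K h w a b c \<delta> has_derivative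
           (\<lambda>v. fst v *\<^sub>R pp_field_dN r K h w a b c N P + snd v *\<^sub>R pp_field_dP a b c \<delta> N)) (at (N, P))"
proof -
  have "((\<lambda>z. prey_rate r K h w (fst z)) has_derivative (\<lambda>v. fst v * (r * (h / (w + N)^2 - 1 / K))))
          (at (N, P))"
    by (rule DERIV_compose_FDERIV) (use prey_rate_has_derivative[OF assms(1,3)] in \<open>auto intro!: derivative_eq_intros\<close>)
  moreover have "((\<lambda>z. monod_haldane b (fst z)) has_derivative (\<lambda>v. fst v * ((b - N^2) / (b + N^2)^2)))
          (at (N, P))"
    by (rule DERIV_compose_FDERIV) (use monod_haldane_has_derivative[OF assms(2)] in \<open>auto intro!: derivative_eq_intros\<close>)
  ultimately show ?thesis
    unfolding pp_field_eq pp_field_dN_def pp_field_dP_def predator_rate_def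
    by (auto intro!: derivative_eq_intros simp: fun_eq_iff algebra_simps)
qed

locale weak_allee_predator_prey =
  fixes r K h w a b c \<delta> N1 :: real
  assumes pos: "0 < r" "0 < K" "0 < w" "0 < b"
    and wK: "w < K" and hw: "h < w"
    and N1_def: "N1 = ((K - w) + sqrt ((K - w)^2 - 4 * K * (h - w))) / 2"
begin

abbreviation "F \<equiv> pp_field r K h w a b c \<delta>"

lemma prey_equilibrium: "h * K = (K - N1) * (w + N1)" "0 < N1" "K - w < 2 * N1"
proof -
  have "0 < (K - w)^2 + 4 * (K * (w - h))"
    using pos(2) wK hw by (intro add_pos_pos) auto
  then have "0 < (K - w)^2 - 4 * K * (h - w)"
    by (simp add: algebra_simps)
  moreover have "N1 = (- (- (K - w)) + sqrt (discrim 1 (- (K - w)) (K * (h - w)))) / (2 * 1)"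
    by (simp add: N1_def discrim_def power2_commute)
  ultimately have "1 * N1^2 + (- (K - w)) * N1 + K * (h - w) = 0"
    using discriminant_nonneg[of 1 "- (K - w)" "K * (h - w)" N1] by (simp add: discrim_def power2_commute)
  then show "h * K = (K - N1) * (w + N1)"
    by (simp add: algebra_simps power2_eq_square)
  define s where "s = sqrt ((K - w)^2 - 4 * K * (h - w))"
  have "0 < s"
    unfolding s_def using \<open>0 < (K - w)^2 - 4 * K * (h - w)\<close> by (rule real_sqrt_gt_zero)
  moreover have "N1 = ((K - w) + s) / 2"
    by (simp add: N1_def s_def)
  ultimately show "0 < N1" "K - w < 2 * N1"
    using wK by simp_all
qed

lemma prey_rate_N1: "prey_rate r K h w N1 = 0"
  using prey_equilibrium pos unfolding prey_rate_def by (simp add: field_simps)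

lemma equilibrium_E1: "F (N1, 0) = 0"
  by (simp add: pp_field_eq prey_rate_N1 zero_prod_def)

definition prey_eigenvalue :: real where
  "prey_eigenvalue = N1 * r * (h / (w + N1)^2 - 1 / K)"

lemma prey_eigenvalue_neg: "prey_eigenvalue < 0"
proof -
  have "h * K < (w + N1)^2"
    using prey_equilibrium pos by (simp add: power2_eq_square mult_strict_right_mono)
  then have "h / (w + N1)^2 < 1 / K"
    using prey_equilibrium pos by (simp add: field_simps)
  then show ?thesis
    using prey_equilibrium pos by (simp add: prey_eigenvalue_def mult_pos_neg)
qed

lemma jacobian_E1:
  "(F has_derivative (\<lambda>v. (prey_eigenvalue * fst v + (- a * monod_haldane b N1) * snd v,
                           predator_rate b c \<delta> N1 * snd v))) (at (N1, 0))"
proof -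
  have "(F has_derivative
          (\<lambda>v. fst v *\<^sub>R pp_field_dN r K h w a b c N1 0 + snd v *\<^sub>R pp_field_dP a b c \<delta> N1)) (at (N1, 0))"
    using prey_equilibrium pos by (intro pp_field_has_derivative) auto
  then show ?thesis
    by (simp add: pp_field_dN_def pp_field_dP_def prey_eigenvalue_def prey_rate_N1 algebra_simps)
qed

lemma stable_if_predator_declines:
  assumes "predator_rate b c \<delta> N1 < 0"
  shows "locally_asymptotically_stable F (N1, 0)"
proof -
  obtain k \<gamma> where "0 < k" "0 < \<gamma>" and lyap: "\<And>v. weighted_inner k v
      (prey_eigenvalue * fst v + (- a * monod_haldane b N1) * snd v, predator_rate b c \<delta> N1 * snd v)
      \<le> - \<gamma> * weighted_inner k v v"
    using triangular_weighted_lyapunov[OF prey_eigenvalue_neg assms] by blast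
  from exponential_estimate_of_linearization[OF jacobian_E1 equilibrium_E1 \<open>0 < k\<close> \<open>0 < \<gamma>\<close> lyap]
  obtain \<eta> C where "0 < \<eta>" "0 \<le> C"
    and estimate: "\<And>x T t. solution_on F x {0..T} \<Longrightarrow> 0 \<le> T \<Longrightarrow> dist (x 0) (N1, 0) < \<eta> \<Longrightarrow> t \<in> {0..T}
                     \<Longrightarrow> dist (x t) (N1, 0) \<le> C * dist (x 0) (N1, 0) * exp (- (\<gamma> / 2) * t)"
    by blast
  have "lyapunov_stable F (N1, 0)" "locally_attractive F (N1, 0)"
    using \<open>0 < \<gamma>\<close>
    by (auto intro: lyapunov_stable_of_exponential_estimate[OF \<open>0 < \<eta>\<close> _ \<open>0 \<le> C\<close> estimate]
        locally_attractive_of_exponential_estimate[OF \<open>0 < \<eta>\<close> _ estimate])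
  then show ?thesis
    using equilibrium_E1 by (simp add: locally_asymptotically_stable_def)
qed

lemma saddle_if_predator_grows:
  assumes "0 < predator_rate b c \<delta> N1"
  shows "is_saddle F (N1, 0)"
proof -
  define J where "J = (\<lambda>v. (prey_eigenvalue * fst v + (- a * monod_haldane b N1) * snd v,
                              predator_rate b c \<delta> N1 * snd v))"
  define v\<^sub>2 where "v\<^sub>2 = (- a * monod_haldane b N1, predator_rate b c \<delta> N1 - prey_eigenvalue)"
  have "J (1, 0) = prey_eigenvalue *\<^sub>R (1, 0)" "J v\<^sub>2 = predator_rate b c \<delta> N1 *\<^sub>R v\<^sub>2"
    by (simp_all add: J_def v\<^sub>2_def algebra_simps)
  moreover have "(1, 0) \<noteq> (0 :: real \<times> real)" "v\<^sub>2 \<noteq> 0"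
    using prey_eigenvalue_neg assms by (auto simp: v\<^sub>2_def zero_prod_def)
  ultimately show ?thesis
    unfolding is_saddle_def using equilibrium_E1 jacobian_E1 prey_eigenvalue_neg assms
    unfolding J_def[symmetric] by blast
qed

lemma lipschitz_near_E1: obtains L where "L-lipschitz_on (cball (N1, 0) (N1 / 2)) F"
proof (rule lipschitz_on_of_continuous_partials)
  define U where "U = {z :: real \<times> real. 0 < w + fst z}"
  have U: "cball (N1, 0) (N1 / 2) \<subseteq> U"
  proof
    fix z :: "real \<times> real" assume "z \<in> cball (N1, 0) (N1 / 2)"
    then have "N1 - fst z \<le> N1 / 2"
      using dist_fst_le[of "(N1, 0)" z] abs_ge_self[of "N1 - fst z"] by (simp add: dist_real_def)
    then show "z \<in> U"
      using prey_equilibrium(2) pos(3) by (simp add: U_def)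
  qed
  have "continuous_on U (\<lambda>z. pp_field_dN r K h w a b c (fst z) (snd z))"
    "continuous_on U (\<lambda>z. pp_field_dP a b c \<delta> (fst z))"
    using monod_haldane_denominator(2)[OF pos(4)] pos
    unfolding pp_field_dN_def pp_field_dP_def prey_rate_def predator_rate_def
    by (auto simp: U_def intro!: continuous_intros)
  then show "continuous_on (cball (N1, 0) (N1 / 2)) (\<lambda>z. pp_field_dN r K h w a b c (fst z) (snd z))"
    "continuous_on (cball (N1, 0 :: real) (N1 / 2)) (\<lambda>z. pp_field_dP a b c \<delta> (fst z))"
    by (simp_all add: continuous_on_subset[OF _ U])
  fix z :: "real \<times> real" assume "z \<in> cball (N1, 0) (N1 / 2)"
  then have "(F has_derivative (\<lambda>v. fst v *\<^sub>R pp_field_dN r K h w a b c (fst z) (snd z)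
                 + snd v *\<^sub>R pp_field_dP a b c \<delta> (fst z))) (at (fst z, snd z))"
    using U pos by (intro pp_field_has_derivative) (auto simp: U_def)
  then show "(F has_derivative (\<lambda>v. fst v *\<^sub>R pp_field_dN r K h w a b c (fst z) (snd z)
                 + snd v *\<^sub>R pp_field_dP a b c \<delta> (fst z))) (at z within cball (N1, 0) (N1 / 2))"
    by (simp add: has_derivative_at_withinI)
qed auto

lemma unstable_if_predator_grows:
  assumes "0 < predator_rate b c \<delta> N1"
  shows "\<not> lyapunov_stable F (N1, 0)"
proof -
  obtain L where "L-lipschitz_on (cball (N1, 0) (N1 / 2)) F"
    using lipschitz_near_E1 by blast
  moreover have "continuous_on (cball (N1, 0) (N1 / 2)) (\<lambda>z. predator_rate b c \<delta> (fst z))"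
    using pos(4) unfolding predator_rate_def by (intro continuous_intros)
  ultimately show ?thesis
    using prey_equilibrium(2) assms
    by (intro not_lyapunov_stable_of_transversal_growth[where \<phi> = "\<lambda>z. predator_rate b c \<delta> (fst z)"])
      (auto simp: pp_field_eq)
qed

lemma predator_rate_sign:
  "predator_rate b c \<delta> N1 < 0 \<longleftrightarrow> c < \<delta> * (b + N1^2) / N1"
  "0 < predator_rate b c \<delta> N1 \<longleftrightarrow> c > \<delta> * (b + N1^2) / N1"
  using prey_equilibrium(2) monod_haldane_denominator(1)[OF pos(4), of N1]
  by (auto simp: predator_rate_def monod_haldane_def field_simps)

end

theorem theorem5:
  fixes r K h w a b c \<delta> :: real
  assumes "0 < r" "0 < K" "0 < h" "0 < w" "0 < a" "0 < b" "0 < c" "0 < \<delta>"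
    and "w < K" and "h < w"
  defines "N1 \<equiv> ((K - w) + sqrt ((K - w)^2 - 4 * K * (h - w))) / 2"
  shows "(c < \<delta> * (b + N1^2) / N1 \<longrightarrow>
            locally_asymptotically_stable (pp_field r K h w a b c \<delta>) (N1, 0))
       \<and> (c > \<delta> * (b + N1^2) / N1 \<longrightarrow>
            \<not> lyapunov_stable (pp_field r K h w a b c \<delta>) (N1, 0)
            \<and> is_saddle (pp_field r K h w a b c \<delta>) (N1, 0))"
proof -
  interpret weak_allee_predator_prey r K h w a b c \<delta> N1
    using assms by unfold_locales (auto simp: N1_def)
  show ?thesis
    using predator_rate_sign stable_if_predator_declines unstable_if_predator_grows saddle_if_predator_grows
    by blast
qed

end
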